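(* Let $(G_n)_{n\in\mathbb N}$ be a sequence of topological groups, each metrized by a left-invariant distance $d_n$ inducing its topology, and let $p\in[1,\infty)$. Then $\ell_p((G_n)_n):=\{(x_n)_n: x_n\in G_n,\ \sum_n d_n(x_n,e_{G_n})^p<\infty\}$, with componentwise multiplication $(x_n)_n\cdot(y_n)_n=(x_ny_n)_n$ and the distance $d((x_n)_n,(y_n)_n)=\big(\sum_n d_n(x_n,y_n)^p\big)^{1/p}$, is a topological group. *)

theory Defs
  imports "HOL-Analysis.Analysis" "HOL-Algebra.Group"
begin

definition topological_group :: "('a, 'b) monoid_scheme \<Rightarrow> 'a topology \<Rightarrow> bool" where
  "topological_group G T \<longleftrightarrow>
     group G \<and> topspace T = carrier G \<and>
     continuous_map (prod_topology T T) T (\<lambda>(x, y). x \<otimes>\<^bsub>G\<^esub> y) \<and>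
     continuous_map T T (\<lambda>x. inv\<^bsub>G\<^esub> x)"

definition left_invariant :: "('a, 'b) monoid_scheme \<Rightarrow> ('a \<Rightarrow> 'a \<Rightarrow> real) \<Rightarrow> bool" where
  "left_invariant G d \<longleftrightarrow>
     (\<forall>x\<in>carrier G. \<forall>y\<in>carrier G. \<forall>z\<in>carrier G. d (z \<otimes>\<^bsub>G\<^esub> x) (z \<otimes>\<^bsub>G\<^esub> y) = d x y)"

definition lp_carrier :: "(nat \<Rightarrow> ('a, 'b) monoid_scheme) \<Rightarrow> (nat \<Rightarrow> 'a \<Rightarrow> 'a \<Rightarrow> real) \<Rightarrow> real
    \<Rightarrow> (nat \<Rightarrow> 'a) set" where
  "lp_carrier G d p = {x. (\<forall>n. x n \<in> carrier (G n)) \<and>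
                          summable (\<lambda>n. d n (x n) \<one>\<^bsub>G n\<^esub> powr p)}"

definition lp_group :: "(nat \<Rightarrow> ('a, 'b) monoid_scheme) \<Rightarrow> (nat \<Rightarrow> 'a \<Rightarrow> 'a \<Rightarrow> real) \<Rightarrow> real
    \<Rightarrow> (nat \<Rightarrow> 'a) monoid" where
  "lp_group G d p = \<lparr> carrier = lp_carrier G d p,
                      mult = (\<lambda>x y n. x n \<otimes>\<^bsub>G n\<^esub> y n),
                      one = (\<lambda>n. \<one>\<^bsub>G n\<^esub>) \<rparr>"

definition lp_dist :: "(nat \<Rightarrow> 'a \<Rightarrow> 'a \<Rightarrow> real) \<Rightarrow> real \<Rightarrow> (nat \<Rightarrow> 'a) \<Rightarrow> (nat \<Rightarrow> 'a) \<Rightarrow> real" where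
  "lp_dist d p x y = (\<Sum>n. d n (x n) (y n) powr p) powr (1 / p)"

end

theory Submission
  imports Defs
begin

(* Minkowski's inequality for l_p sums of nonnegative reals makes the l_p distance a metric and the
   l_p product closed under multiplication and inversion. Left invariance of the d_n makes the l_p
   distance left invariant, so joint continuity of multiplication reduces to continuity of the right
   translations. Right translations and inversion act componentwise, and each is controlled in two
   regimes: on finitely many coordinates by continuity in the factors, and on the remaining ones by
   the domination d_n(a_n y_n, x_n y_n) <= 2 d_n(y_n, e) + d_n(a_n, x_n) (and its analogue for
   inverses), since the l_p tail of the fixed element y is small. *)

lemma convex_on_powr_nonneg:
  assumes "1 \<le> p"
  shows "convex_on {0..} (\<lambda>x::real. x powr p)"
proof (rule convex_onI)
  fix t a b :: real assume t: "0 < t" "t < 1" and ab: "a \<in> {0..}" "b \<in> {0..}"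
  have scale: "(w * c) powr p \<le> w * c powr p" if "0 \<le> w" "w \<le> 1" "0 \<le> c" for w c :: real
  proof (cases "w = 0")
    case False
    then have "w powr p \<le> w powr 1" using that assms by (intro powr_mono') auto
    then show ?thesis using that by (simp add: powr_mult mult_right_mono)
  qed simp
  show "((1 - t) *\<^sub>R a + t *\<^sub>R b) powr p \<le> (1 - t) * a powr p + t * b powr p"
  proof (cases "a = 0 \<or> b = 0")
    case True
    then show ?thesis
    proof
      assume "a = 0"
      then show ?thesis using scale[of t b] t ab by simp
    next
      assume "b = 0"
      then show ?thesis using scale[of "1 - t" a] t ab by simp
    qed
  next
    case False
    then show ?thesis using convex_onD[OF powr_convex[OF assms], of t a b] t ab by auto
  qed
qed (rule convex_real_interval)

definition lp_norm :: "real \<Rightarrow> (nat \<Rightarrow> real) \<Rightarrow> real" where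
  "lp_norm p a = (\<Sum>n. a n powr p) powr (1 / p)"

lemma lp_norm_nonneg: "0 \<le> lp_norm p a"
  unfolding lp_norm_def by simp

lemma lp_norm_powr:
  assumes "1 \<le> p" and "summable (\<lambda>n. a n powr p)"
  shows "lp_norm p a powr p = (\<Sum>n. a n powr p)"
  using assms suminf_nonneg[OF assms(2)] unfolding lp_norm_def by (simp add: powr_powr)

lemma lp_norm_eq_0_iff:
  assumes "summable (\<lambda>n. a n powr p)" and "\<And>n. 0 \<le> a n"
  shows "lp_norm p a = 0 \<longleftrightarrow> (\<forall>n. a n = 0)"
proof -
  have "lp_norm p a = 0 \<longleftrightarrow> (\<Sum>n. a n powr p) = 0" unfolding lp_norm_def by simp
  also have "\<dots> \<longleftrightarrow> (\<forall>n. a n powr p = 0)" by (rule suminf_eq_zero_iff[OF assms(1)]) auto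
  finally show ?thesis by simp
qed

lemma lp_norm_le_iff_sum_le:
  assumes "1 \<le> p" and "summable (\<lambda>n. a n powr p)" and "0 \<le> c"
  shows "lp_norm p a \<le> c \<longleftrightarrow> (\<Sum>n. a n powr p) \<le> c powr p"
  using lp_norm_powr[OF assms(1,2)] assms lp_norm_nonneg[of p a] powr_le_cancel_iff
  by (metis less_eq_real_def not_le order_le_less_trans powr_less_mono2 zero_less_one)

lemma lp_summable_mono:
  fixes a b :: "nat \<Rightarrow> real"
  assumes "1 \<le> p" and "\<And>n. 0 \<le> a n" and "\<And>n. a n \<le> b n" and "summable (\<lambda>n. b n powr p)"
  shows "summable (\<lambda>n. a n powr p)"
  by (rule summable_comparison_test'[OF assms(4), of 0]) (use assms in \<open>auto intro: powr_mono2\<close>)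

lemma lp_norm_mono:
  fixes a b :: "nat \<Rightarrow> real"
  assumes "1 \<le> p" and "\<And>n. 0 \<le> a n" and "\<And>n. a n \<le> b n" and "summable (\<lambda>n. b n powr p)"
  shows "lp_norm p a \<le> lp_norm p b"
proof -
  have sa: "summable (\<lambda>n. a n powr p)" by (rule lp_summable_mono[OF assms])
  have "a n powr p \<le> b n powr p" for n using assms by (intro powr_mono2) auto
  then have "(\<Sum>n. a n powr p) \<le> (\<Sum>n. b n powr p)" by (rule suminf_le[OF _ sa assms(4)])
  then show ?thesis
    unfolding lp_norm_def using assms(1) suminf_nonneg[OF sa] by (intro powr_mono2) auto
qed

lemma lp_norm_ge_component:
  fixes a :: "nat \<Rightarrow> real"
  assumes "1 \<le> p" and "\<And>n. 0 \<le> a n" and "summable (\<lambda>n. a n powr p)"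
  shows "a n \<le> lp_norm p a"
proof -
  have "sum (\<lambda>n. a n powr p) {n} \<le> (\<Sum>n. a n powr p)"
    by (rule sum_le_suminf[OF assms(3)]) auto
  then have "(a n powr p) powr (1 / p) \<le> lp_norm p a"
    unfolding lp_norm_def using assms(1) by (intro powr_mono2) auto
  then show ?thesis using assms(1) assms(2)[of n] by (simp add: powr_powr)
qed

lemma lp_minkowski:
  fixes a b :: "nat \<Rightarrow> real"
  assumes p: "1 \<le> p" and nonneg: "\<And>n. 0 \<le> a n" "\<And>n. 0 \<le> b n"
    and sa: "summable (\<lambda>n. a n powr p)" and sb: "summable (\<lambda>n. b n powr p)"
  shows "summable (\<lambda>n. (a n + b n) powr p)"
    and "lp_norm p (\<lambda>n. a n + b n) \<le> lp_norm p a + lp_norm p b"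
proof -
  define A B where "A = lp_norm p a" and "B = lp_norm p b"
  have "summable (\<lambda>n. (a n + b n) powr p) \<and> lp_norm p (\<lambda>n. a n + b n) \<le> A + B"
  proof (cases "A = 0 \<or> B = 0")
    case True
    then have "(\<forall>n. a n = 0) \<or> (\<forall>n. b n = 0)"
      using lp_norm_eq_0_iff[OF sa nonneg(1)] lp_norm_eq_0_iff[OF sb nonneg(2)]
      unfolding A_def B_def by blast
    then show ?thesis using sa sb by (auto simp: A_def B_def lp_norm_nonneg)
  next
    case False
    then have "0 < A" "0 < B" using lp_norm_nonneg unfolding A_def B_def by (metis less_eq_real_def)+
    define S where "S = A + B"
    have "0 < S" using \<open>0 < A\<close> \<open>0 < B\<close> by (simp add: S_def)
    (* a + b is S times the convex combination of a / A and b / B with weights A / S and B / S *)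
    define g where
      "g n = S powr p * ((A / S) * (a n powr p / A powr p) + (B / S) * (b n powr p / B powr p))" for n
    have weights: "1 - B / S = A / S" using \<open>0 < S\<close> by (simp add: S_def field_simps)
    have pointwise: "(a n + b n) powr p \<le> g n" for n
    proof -
      have "a n + b n = S * ((A / S) * (a n / A) + (B / S) * (b n / B))"
        using \<open>0 < A\<close> \<open>0 < B\<close> \<open>0 < S\<close> by (simp add: field_simps)
      then have "(a n + b n) powr p = S powr p * ((1 - B / S) *\<^sub>R (a n / A) + (B / S) *\<^sub>R (b n / B)) powr p"
        using \<open>0 < S\<close> \<open>0 < A\<close> \<open>0 < B\<close> nonneg by (simp add: weights powr_mult)
      also have "\<dots> \<le> S powr p * ((1 - B / S) * (a n / A) powr p + (B / S) * (b n / B) powr p)"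
        using \<open>0 < S\<close> \<open>0 < A\<close> \<open>0 < B\<close> nonneg
        by (intro mult_left_mono convex_onD[OF convex_on_powr_nonneg[OF p]]) (auto simp: S_def)
      also have "\<dots> = g n"
        using \<open>0 < A\<close> \<open>0 < B\<close> nonneg by (simp add: weights g_def powr_divide)
      finally show ?thesis .
    qed
    have "g sums (S powr p * ((A / S) * ((\<Sum>n. a n powr p) / A powr p)
                             + (B / S) * ((\<Sum>n. b n powr p) / B powr p)))"
      unfolding g_def by (intro sums_mult sums_add sums_divide summable_sums sa sb)
    moreover have "(\<Sum>n. a n powr p) = A powr p" "(\<Sum>n. b n powr p) = B powr p"
      unfolding A_def B_def using lp_norm_powr[OF p sa] lp_norm_powr[OF p sb] by simp_all
    moreover have "A / S + B / S = 1" using \<open>0 < S\<close> by (simp add: S_def add_divide_distrib[symmetric])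
    ultimately have g_sums: "g sums S powr p"
      using \<open>0 < A\<close> \<open>0 < B\<close> by simp
    have summable: "summable (\<lambda>n. (a n + b n) powr p)"
      by (rule summable_comparison_test'[OF sums_summable[OF g_sums], of 0]) (use pointwise in auto)
    have "(\<Sum>n. (a n + b n) powr p) \<le> S powr p"
      using suminf_le[OF pointwise summable sums_summable[OF g_sums]] sums_unique[OF g_sums] by simp
    then show ?thesis
      using lp_norm_le_iff_sum_le[OF p summable] \<open>0 < S\<close> summable by (simp add: S_def)
  qed
  then show "summable (\<lambda>n. (a n + b n) powr p)"
    and "lp_norm p (\<lambda>n. a n + b n) \<le> lp_norm p a + lp_norm p b"
    by (auto simp: A_def B_def)
qed

lemma lp_norm_tail_less:
  fixes t :: "nat \<Rightarrow> real"
  assumes p: "1 \<le> p" and "summable (\<lambda>n. t n powr p)" and "0 < \<epsilon>"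
  shows "\<exists>N. lp_norm p (\<lambda>n. if N \<le> n then t n else 0) < \<epsilon>"
proof -
  obtain N where "norm (\<Sum>i. t (i + N) powr p) < \<epsilon> powr p"
    using suminf_exist_split[of "\<epsilon> powr p", OF _ assms(2)] \<open>0 < \<epsilon>\<close> by auto
  then have N: "(\<Sum>i. t (i + N) powr p) < \<epsilon> powr p" by (simp add: abs_less_iff)
  define tail where "tail n = (if N \<le> n then t n else 0)" for n
  have tail_powr: "(\<lambda>n. tail n powr p) = (\<lambda>n. if N \<le> n then t n powr p else 0)"
    by (auto simp: tail_def)
  have summable: "summable (\<lambda>n. tail n powr p)"
    unfolding tail_powr using assms(2)
    by (subst summable_cong[where g = "\<lambda>n. t n powr p"]) (auto simp: eventually_at_top_linorder)
  have "(\<Sum>n. tail n powr p) = (\<Sum>i. t (i + N) powr p)"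
    using suminf_split_initial_segment[OF summable, of N] by (simp add: tail_def)
  then have "(\<Sum>n. tail n powr p) < \<epsilon> powr p" using N by simp
  then have "lp_norm p tail < (\<epsilon> powr p) powr (1 / p)"
    unfolding lp_norm_def using p by (intro powr_less_mono2) (auto intro!: suminf_nonneg summable)
  then have "lp_norm p tail < \<epsilon>" using p \<open>0 < \<epsilon>\<close> by (simp add: powr_powr)
  then show ?thesis unfolding tail_def by blast
qed

lemma lp_norm_le_if_finite_support:
  fixes a :: "nat \<Rightarrow> real"
  assumes p: "1 \<le> p" and "\<And>n. 0 \<le> a n" and "\<And>n. N \<le> n \<Longrightarrow> a n = 0" and "\<And>n. a n \<le> \<eta>"
  shows "lp_norm p a \<le> (real N + 1) * \<eta>"
proof -
  have "0 \<le> \<eta>" using assms(2,4) order_trans by blast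
  have summable: "summable (\<lambda>n. a n powr p)"
    by (rule summable_finite[of "{..<N}"]) (use assms(3) in auto)
  have "(\<Sum>n. a n powr p) = (\<Sum>n<N. a n powr p)"
    by (rule suminf_finite) (use assms(3) in auto)
  also have "\<dots> \<le> (\<Sum>n<N. \<eta> powr p)"
    using assms(2,4) p by (intro sum_mono powr_mono2) auto
  also have "\<dots> = real N * \<eta> powr p" by simp
  also have "\<dots> \<le> (real N + 1) powr p * \<eta> powr p"
    using powr_mono[of 1 p "real N + 1"] p by (intro mult_right_mono) auto
  also have "\<dots> = ((real N + 1) * \<eta>) powr p" using \<open>0 \<le> \<eta>\<close> by (simp add: powr_mult)
  finally show ?thesis using lp_norm_le_iff_sum_le[OF p summable] \<open>0 \<le> \<eta>\<close> by simp
qed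

lemma lp_norm_le_head_tail:
  fixes u t s :: "nat \<Rightarrow> real"
  assumes p: "1 \<le> p" and "0 \<le> \<eta>"
    and u_nonneg: "\<And>n. 0 \<le> u n" and t_nonneg: "\<And>n. 0 \<le> t n" and s_nonneg: "\<And>n. 0 \<le> s n"
    and t_summable: "summable (\<lambda>n. t n powr p)" and s_summable: "summable (\<lambda>n. s n powr p)"
    and head: "\<And>n. n < N \<Longrightarrow> u n \<le> \<eta>" and tail: "\<And>n. N \<le> n \<Longrightarrow> u n \<le> t n + s n"
  shows "lp_norm p u \<le> (real N + 1) * \<eta> + lp_norm p t + lp_norm p s"
proof -
  define h where "h n = (if n < N then u n else 0)" for n
  define r where "r n = (if n < N then 0 else u n)" for n
  have h_nonneg: "0 \<le> h n" and r_nonneg: "0 \<le> r n" for n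
    using u_nonneg by (simp_all add: h_def r_def)
  have h_norm: "lp_norm p h \<le> (real N + 1) * \<eta>"
    using head \<open>0 \<le> \<eta>\<close> by (intro lp_norm_le_if_finite_support[OF p h_nonneg]) (simp_all add: h_def)
  have h_summable: "summable (\<lambda>n. h n powr p)"
    by (rule summable_finite[of "{..<N}"]) (simp_all add: h_def)
  have r_le: "r n \<le> t n + s n" for n
    using tail[of n] t_nonneg[of n] s_nonneg[of n] by (simp add: r_def)
  note t_plus_s = lp_minkowski[OF p t_nonneg s_nonneg t_summable s_summable]
  have r_norm: "lp_norm p r \<le> lp_norm p t + lp_norm p s"
    using lp_norm_mono[OF p r_nonneg r_le t_plus_s(1)] t_plus_s(2) by linarith
  have "u = (\<lambda>n. h n + r n)" by (auto simp: h_def r_def)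
  then have "lp_norm p u \<le> lp_norm p h + lp_norm p r"
    using lp_minkowski(2)[OF p h_nonneg r_nonneg h_summable
        lp_summable_mono[OF p r_nonneg r_le t_plus_s(1)]] by simp
  then show ?thesis using h_norm r_norm by linarith
qed

(* On the finitely many coordinates below N the coordinatewise control applies;
   beyond N the domination by the fixed l_p sequence t makes the tail small. *)
lemma lp_norm_small_if_dominated:
  fixes s u :: "'x \<Rightarrow> nat \<Rightarrow> real" and t :: "nat \<Rightarrow> real"
  assumes p: "1 \<le> p" and t_nonneg: "\<And>n. 0 \<le> t n" and t_summable: "summable (\<lambda>n. t n powr p)"
    and "0 < \<epsilon>"
    and s_nonneg: "\<And>y n. y \<in> X \<Longrightarrow> 0 \<le> s y n"
    and s_summable: "\<And>y. y \<in> X \<Longrightarrow> summable (\<lambda>n. s y n powr p)"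
    and u_nonneg: "\<And>y n. y \<in> X \<Longrightarrow> 0 \<le> u y n"
    and coordinatewise: "\<And>n \<eta>. 0 < \<eta> \<Longrightarrow> \<exists>\<delta>>0. \<forall>y\<in>X. s y n < \<delta> \<longrightarrow> u y n < \<eta>"
    and dominated: "\<And>y n. y \<in> X \<Longrightarrow> u y n \<le> t n + s y n"
  shows "\<exists>\<delta>>0. \<forall>y\<in>X. lp_norm p (s y) < \<delta> \<longrightarrow> lp_norm p (u y) < \<epsilon>"
proof -
  obtain N where "lp_norm p (\<lambda>n. if N \<le> n then t n else 0) < \<epsilon> / 4"
    using lp_norm_tail_less[OF p t_summable] \<open>0 < \<epsilon>\<close> by (meson zero_less_divide_iff zero_less_numeral)
  moreover define tail where "tail = (\<lambda>n. if N \<le> n then t n else 0)"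
  ultimately have tail_small: "lp_norm p tail < \<epsilon> / 4" by simp
  have tail_nonneg: "0 \<le> tail n" for n using t_nonneg by (simp add: tail_def)
  have tail_summable: "summable (\<lambda>n. tail n powr p)"
    by (rule lp_summable_mono[OF p tail_nonneg _ t_summable]) (simp add: tail_def t_nonneg)
  define \<eta> where "\<eta> = \<epsilon> / (4 * (real N + 1))"
  have "0 < \<eta>" and head_bound: "(real N + 1) * \<eta> = \<epsilon> / 4"
    using \<open>0 < \<epsilon>\<close> by (simp_all add: \<eta>_def field_simps)
  obtain \<delta>c where \<delta>c_pos: "\<And>n. 0 < \<delta>c n"
    and \<delta>c: "\<And>n y. y \<in> X \<Longrightarrow> s y n < \<delta>c n \<Longrightarrow> u y n < \<eta>"
    using coordinatewise[OF \<open>0 < \<eta>\<close>] by metis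
  define \<delta> where "\<delta> = Min (insert (\<epsilon> / 4) (\<delta>c ` {..<N}))"
  have "0 < \<delta>" unfolding \<delta>_def using \<open>0 < \<epsilon>\<close> \<delta>c_pos by (subst Min_gr_iff) auto
  have "\<delta> \<le> \<epsilon> / 4" unfolding \<delta>_def by (rule Min_le) auto
  have \<delta>_le: "\<delta> \<le> \<delta>c n" if "n < N" for n unfolding \<delta>_def using that by simp
  have "lp_norm p (u y) < \<epsilon>" if "y \<in> X" and s_small: "lp_norm p (s y) < \<delta>" for y
  proof -
    have "u y n \<le> \<eta>" if "n < N" for n
      using lp_norm_ge_component[OF p s_nonneg[OF \<open>y \<in> X\<close>] s_summable[OF \<open>y \<in> X\<close>], of n]
        \<delta>c[OF \<open>y \<in> X\<close>, of n] \<delta>_le[OF that] s_small by simp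
    moreover have "u y n \<le> tail n + s y n" if "N \<le> n" for n
      using dominated[OF \<open>y \<in> X\<close>, of n] that by (simp add: tail_def)
    ultimately have "lp_norm p (u y) \<le> (real N + 1) * \<eta> + lp_norm p tail + lp_norm p (s y)"
      using \<open>0 < \<eta>\<close> u_nonneg s_nonneg s_summable \<open>y \<in> X\<close>
      by (intro lp_norm_le_head_tail[OF p _ _ tail_nonneg _ tail_summable]) auto
    then show ?thesis using head_bound tail_small s_small \<open>\<delta> \<le> \<epsilon> / 4\<close> \<open>0 < \<epsilon>\<close> by linarith
  qed
  then show ?thesis using \<open>0 < \<delta>\<close> by blast
qed

lemma left_invariant_dist_mult_right:
  fixes G (structure)
  assumes "group G" and "left_invariant G d" and "x \<in> carrier G" and "y \<in> carrier G"
  shows "d (x \<otimes> y) x = d y \<one>"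
proof -
  interpret group G by fact
  show ?thesis using assms(2-4) unfolding left_invariant_def by (metis one_closed r_one)
qed

lemma left_invariant_dist_inv_one:
  fixes G (structure)
  assumes "group G" and "Metric_space (carrier G) d" and "left_invariant G d" and "x \<in> carrier G"
  shows "d (inv x) \<one> = d x \<one>"
proof -
  interpret group G by fact
  have "d (inv x) \<one> = d (x \<otimes> inv x) (x \<otimes> \<one>)"
    using assms(3)[unfolded left_invariant_def, rule_format, OF inv_closed one_closed, OF assms(4,4)]
    by simp
  also have "\<dots> = d \<one> x" using assms(4) by simp
  finally show ?thesis using Metric_space.commute[OF assms(2)] by simp
qed

lemma left_invariant_dist_mult_right_le:
  fixes G (structure)
  assumes "group G" and "Metric_space (carrier G) d" and "left_invariant G d"
    and "a \<in> carrier G" and "x \<in> carrier G" and "y \<in> carrier G"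
  shows "d (a \<otimes> y) (x \<otimes> y) \<le> 2 * d y \<one> + d a x"
proof -
  interpret group G by fact
  interpret Metric_space "carrier G" d by fact
  have "d (a \<otimes> y) (x \<otimes> y) \<le> d (a \<otimes> y) a + d a x + d x (x \<otimes> y)"
    using assms(4-6) triangle[of "a \<otimes> y" a "x \<otimes> y"] triangle[of a x "x \<otimes> y"] by simp
  also have "\<dots> = 2 * d y \<one> + d a x"
    using left_invariant_dist_mult_right[OF assms(1,3)] assms(4-6) commute[of x "x \<otimes> y"] by simp
  finally show ?thesis .
qed

lemma left_invariant_dist_inv_le:
  fixes G (structure)
  assumes "group G" and "Metric_space (carrier G) d" and "left_invariant G d"
    and "a \<in> carrier G" and "x \<in> carrier G"
  shows "d (inv a) (inv x) \<le> 2 * d a \<one> + d a x"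
proof -
  interpret group G by fact
  interpret Metric_space "carrier G" d by fact
  have "d (inv a) (inv x) \<le> d (inv a) \<one> + d (inv x) \<one>"
    using assms(4,5) triangle[of "inv a" \<one> "inv x"] commute[of \<one> "inv x"] by simp
  also have "\<dots> = d a \<one> + d x \<one>"
    using left_invariant_dist_inv_one[OF assms(1-3)] assms(4,5) by simp
  also have "\<dots> \<le> 2 * d a \<one> + d a x"
    using assms(4,5) triangle[of x a \<one>] commute[of x a] by simp
  finally show ?thesis .
qed

lemma left_invariant_dist_mult_le:
  fixes G (structure)
  assumes "group G" and "Metric_space (carrier G) d" and "left_invariant G d"
    and "a \<in> carrier G" and "b \<in> carrier G" and "x \<in> carrier G" and "y \<in> carrier G"
  shows "d (a \<otimes> b) (x \<otimes> y) \<le> d (a \<otimes> b) (x \<otimes> b) + d b y"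
proof -
  interpret group G by fact
  have "d (a \<otimes> b) (x \<otimes> y) \<le> d (a \<otimes> b) (x \<otimes> b) + d (x \<otimes> b) (x \<otimes> y)"
    using assms(4-7) by (intro Metric_space.triangle[OF assms(2)]) auto
  then show ?thesis using assms(3,5-7) unfolding left_invariant_def by simp
qed

lemma topological_group_continuous_map_mult_right:
  fixes G (structure)
  assumes "topological_group G T" and "y \<in> carrier G"
  shows "continuous_map T T (\<lambda>x. x \<otimes> y)"
proof -
  have "continuous_map T (prod_topology T T) (\<lambda>x. (x, y))"
    using assms unfolding topological_group_def by (simp add: continuous_map_pairedI)
  then show ?thesis
    using continuous_map_compose assms unfolding topological_group_def by (fastforce simp: o_def)
qed

lemma topological_group_of_left_invariant_metric:
  fixes G (structure)
  assumes group: "group G" and metric: "Metric_space (carrier G) d" and left_inv: "left_invariant G d"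
    and mult_right: "\<And>y. y \<in> carrier G \<Longrightarrow>
      continuous_map (Metric_space.mtopology (carrier G) d) (Metric_space.mtopology (carrier G) d) (\<lambda>x. x \<otimes> y)"
    and inverse: "continuous_map (Metric_space.mtopology (carrier G) d) (Metric_space.mtopology (carrier G) d) (\<lambda>x. inv x)"
  shows "topological_group G (Metric_space.mtopology (carrier G) d)"
proof -
  interpret M: Metric_space "carrier G" d by (rule metric)
  interpret M2: Metric_space12 "carrier G" d "carrier G" d by (simp add: Metric_space12_def metric)
  have "continuous_map (prod_topology M.mtopology M.mtopology) M.mtopology (\<lambda>(x, y). x \<otimes> y)"
    unfolding M2.mtopology_prod_metric[symmetric] M2.Prod_metric.metric_continuous_map[OF metric]
  proof (intro conjI ballI allI impI)
    show "(\<lambda>(x, y). x \<otimes> y) ` (carrier G \<times> carrier G) \<subseteq> carrier G"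
      using group by (auto simp: group.is_monoid monoid.m_closed)
  next
    fix ab :: "_ \<times> _" and \<epsilon> :: real assume "ab \<in> carrier G \<times> carrier G" and "0 < \<epsilon>"
    then obtain a b where ab: "ab = (a, b)" "a \<in> carrier G" "b \<in> carrier G" by auto
    obtain \<delta> where "0 < \<delta>" and \<delta>: "\<And>x. x \<in> carrier G \<Longrightarrow> d a x < \<delta> \<Longrightarrow> d (a \<otimes> b) (x \<otimes> b) < \<epsilon> / 2"
      using mult_right[OF \<open>b \<in> carrier G\<close>] \<open>a \<in> carrier G\<close> \<open>0 < \<epsilon>\<close>
      unfolding M.metric_continuous_map[OF metric] by (meson half_gt_zero)
    show "\<exists>\<delta>>0. \<forall>xy. xy \<in> carrier G \<times> carrier G \<and> prod_dist d d ab xy < \<delta> \<longrightarrow>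
            d ((\<lambda>(x, y). x \<otimes> y) ab) ((\<lambda>(x, y). x \<otimes> y) xy) < \<epsilon>"
    proof (intro exI[of _ "min \<delta> (\<epsilon> / 2)"] conjI allI impI)
      fix xy assume xy: "xy \<in> carrier G \<times> carrier G \<and> prod_dist d d ab xy < min \<delta> (\<epsilon> / 2)"
      then obtain x y where xy_eq: "xy = (x, y)" and "x \<in> carrier G" "y \<in> carrier G" by auto
      have "d a x \<le> prod_dist d d (a, b) (x, y)" "d b y \<le> prod_dist d d (a, b) (x, y)"
        by (rule M2.component_le_prod_metric)+
      then have "d a x < \<delta>" "d b y < \<epsilon> / 2" using xy unfolding ab xy_eq by auto
      then show "d ((\<lambda>(x, y). x \<otimes> y) ab) ((\<lambda>(x, y). x \<otimes> y) xy) < \<epsilon>"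
        using left_invariant_dist_mult_le[OF group metric left_inv ab(2,3) \<open>x \<in> carrier G\<close> \<open>y \<in> carrier G\<close>]
          \<delta>[OF \<open>x \<in> carrier G\<close>] unfolding ab xy_eq by fastforce
    qed (use \<open>0 < \<delta>\<close> \<open>0 < \<epsilon>\<close> in simp)
  qed
  then show ?thesis
    unfolding topological_group_def using group inverse by simp
qed

lemma lp_dist_eq_lp_norm: "lp_dist d p x y = lp_norm p (\<lambda>n. d n (x n) (y n))"
  unfolding lp_dist_def lp_norm_def ..

lemma lp_group_simps [simp]:
  "carrier (lp_group G d p) = lp_carrier G d p"
  "x \<otimes>\<^bsub>lp_group G d p\<^esub> y = (\<lambda>n. x n \<otimes>\<^bsub>G n\<^esub> y n)"
  "\<one>\<^bsub>lp_group G d p\<^esub> = (\<lambda>n. \<one>\<^bsub>G n\<^esub>)"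
  unfolding lp_group_def by simp_all

locale lp_product =
  fixes G :: "nat \<Rightarrow> ('a, 'b) monoid_scheme"
    and d :: "nat \<Rightarrow> 'a \<Rightarrow> 'a \<Rightarrow> real"
    and p :: real
  assumes metric: "\<And>n. Metric_space (carrier (G n)) (d n)"
    and left_inv: "\<And>n. left_invariant (G n) (d n)"
    and topgrp: "\<And>n. topological_group (G n) (Metric_space.mtopology (carrier (G n)) (d n))"
    and p: "1 \<le> p"
begin

abbreviation lp :: "(nat \<Rightarrow> 'a) set" where "lp \<equiv> lp_carrier G d p"

abbreviation lp_topology :: "(nat \<Rightarrow> 'a) topology" where
  "lp_topology \<equiv> Metric_space.mtopology lp (lp_dist d p)"

abbreviation factor_topology :: "nat \<Rightarrow> 'a topology" where
  "factor_topology n \<equiv> Metric_space.mtopology (carrier (G n)) (d n)"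

lemma group_factor: "group (G n)"
  using topgrp unfolding topological_group_def by blast

lemma dist_nonneg [simp]: "0 \<le> d n x y"
  by (rule Metric_space.nonneg[OF metric])

lemma dist_commute: "d n x y = d n y x"
  by (rule Metric_space.commute[OF metric])

lemma dist_triangle:
  "x \<in> carrier (G n) \<Longrightarrow> y \<in> carrier (G n) \<Longrightarrow> z \<in> carrier (G n) \<Longrightarrow> d n x z \<le> d n x y + d n y z"
  by (rule Metric_space.triangle[OF metric])

lemma lp_component: "x \<in> lp \<Longrightarrow> x n \<in> carrier (G n)"
  unfolding lp_carrier_def by blast

lemma lp_summable: "x \<in> lp \<Longrightarrow> summable (\<lambda>n. d n (x n) \<one>\<^bsub>G n\<^esub> powr p)"
  unfolding lp_carrier_def by blast

lemma one_factor: "\<one>\<^bsub>G n\<^esub> \<in> carrier (G n)"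
  by (simp add: group.is_monoid[OF group_factor] monoid.one_closed)

lemma summable_double_dist_one:
  assumes "x \<in> lp" shows "summable (\<lambda>n. (2 * d n (x n) \<one>\<^bsub>G n\<^esub>) powr p)"
  using summable_mult[OF lp_summable[OF assms], of "2 powr p"] by (simp add: powr_mult)

lemma lp_carrier_dominated:
  assumes "\<And>n. x n \<in> carrier (G n)" and "y \<in> lp" and "z \<in> lp"
    and "\<And>n. d n (x n) \<one>\<^bsub>G n\<^esub> \<le> d n (y n) \<one>\<^bsub>G n\<^esub> + d n (z n) \<one>\<^bsub>G n\<^esub>"
  shows "x \<in> lp"
proof -
  have "summable (\<lambda>n. d n (x n) \<one>\<^bsub>G n\<^esub> powr p)"
    by (rule lp_summable_mono[OF p dist_nonneg assms(4) lp_minkowski(1)[OF p dist_nonneg dist_nonneg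
          lp_summable[OF assms(2)] lp_summable[OF assms(3)]]])
  then show ?thesis using assms(1) unfolding lp_carrier_def by blast
qed

lemma summable_lp_dist:
  assumes "x \<in> lp" and "y \<in> lp"
  shows "summable (\<lambda>n. d n (x n) (y n) powr p)"
proof -
  have "d n (x n) (y n) \<le> d n (x n) \<one>\<^bsub>G n\<^esub> + d n (y n) \<one>\<^bsub>G n\<^esub>" for n
    using dist_triangle[OF lp_component[OF assms(1), of n] one_factor lp_component[OF assms(2), of n]]
    by (simp add: dist_commute[of n "\<one>\<^bsub>G n\<^esub>" "y n"])
  then show ?thesis
    by (rule lp_summable_mono[OF p dist_nonneg _ lp_minkowski(1)[OF p dist_nonneg dist_nonneg
          lp_summable[OF assms(1)] lp_summable[OF assms(2)]]])
qed

lemma Metric_space_lp: "Metric_space lp (lp_dist d p)"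
proof
  fix x y
  show "0 \<le> lp_dist d p x y" unfolding lp_dist_eq_lp_norm by (rule lp_norm_nonneg)
  show "lp_dist d p x y = lp_dist d p y x" unfolding lp_dist_def by (simp add: dist_commute)
next
  fix x y assume "x \<in> lp" "y \<in> lp"
  have "lp_dist d p x y = 0 \<longleftrightarrow> (\<forall>n. d n (x n) (y n) = 0)"
    unfolding lp_dist_eq_lp_norm by (rule lp_norm_eq_0_iff[OF summable_lp_dist[OF \<open>x \<in> lp\<close> \<open>y \<in> lp\<close>] dist_nonneg])
  also have "\<dots> \<longleftrightarrow> x = y"
    using Metric_space.zero[OF metric lp_component[OF \<open>x \<in> lp\<close>] lp_component[OF \<open>y \<in> lp\<close>]]
    by (auto simp: fun_eq_iff)
  finally show "lp_dist d p x y = 0 \<longleftrightarrow> x = y" .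
next
  fix x y z assume xyz: "x \<in> lp" "y \<in> lp" "z \<in> lp"
  note sum_xy_yz = lp_minkowski[OF p dist_nonneg dist_nonneg summable_lp_dist[OF xyz(1,2)] summable_lp_dist[OF xyz(2,3)]]
  have "d n (x n) (z n) \<le> d n (x n) (y n) + d n (y n) (z n)" for n
    using dist_triangle lp_component xyz by blast
  from lp_norm_mono[OF p dist_nonneg this sum_xy_yz(1)] sum_xy_yz(2)
  show "lp_dist d p x z \<le> lp_dist d p x y + lp_dist d p y z"
    unfolding lp_dist_eq_lp_norm by linarith
qed

lemma lp_mult_closed:
  assumes "x \<in> lp" and "y \<in> lp"
  shows "(\<lambda>n. x n \<otimes>\<^bsub>G n\<^esub> y n) \<in> lp"
proof (rule lp_carrier_dominated[OF _ assms(2,1)])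
  fix n
  have x: "x n \<in> carrier (G n)" and y: "y n \<in> carrier (G n)"
    using lp_component[OF assms(1)] lp_component[OF assms(2)] by simp_all
  then show xy: "x n \<otimes>\<^bsub>G n\<^esub> y n \<in> carrier (G n)"
    by (simp add: group.is_monoid[OF group_factor] monoid.m_closed)
  show "d n (x n \<otimes>\<^bsub>G n\<^esub> y n) \<one>\<^bsub>G n\<^esub> \<le> d n (y n) \<one>\<^bsub>G n\<^esub> + d n (x n) \<one>\<^bsub>G n\<^esub>"
    using dist_triangle[OF xy x one_factor]
      left_invariant_dist_mult_right[OF group_factor left_inv x y] by simp
qed

lemma lp_inv_closed:
  assumes "x \<in> lp" shows "(\<lambda>n. inv\<^bsub>G n\<^esub> x n) \<in> lp"
  using assms group.inv_closed[OF group_factor] lp_component[OF assms]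
    left_invariant_dist_inv_one[OF group_factor metric left_inv lp_component[OF assms]]
  unfolding lp_carrier_def by simp

lemma lp_one_closed: "(\<lambda>n. \<one>\<^bsub>G n\<^esub>) \<in> lp"
  using one_factor Metric_space.zero[OF metric one_factor one_factor] p
  unfolding lp_carrier_def by simp

lemma group_lp_group: "group (lp_group G d p)"
proof (rule groupI)
  fix x y z assume "x \<in> carrier (lp_group G d p)" "y \<in> carrier (lp_group G d p)"
    "z \<in> carrier (lp_group G d p)"
  then show "x \<otimes>\<^bsub>lp_group G d p\<^esub> y \<otimes>\<^bsub>lp_group G d p\<^esub> z
      = x \<otimes>\<^bsub>lp_group G d p\<^esub> (y \<otimes>\<^bsub>lp_group G d p\<^esub> z)"
    using group.is_monoid[OF group_factor] by (auto intro!: ext monoid.m_assoc lp_component)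
next
  fix x assume "x \<in> carrier (lp_group G d p)"
  then show "\<one>\<^bsub>lp_group G d p\<^esub> \<otimes>\<^bsub>lp_group G d p\<^esub> x = x"
    using group.is_monoid[OF group_factor] by (auto intro!: ext monoid.l_one lp_component)
  show "\<exists>y\<in>carrier (lp_group G d p). y \<otimes>\<^bsub>lp_group G d p\<^esub> x = \<one>\<^bsub>lp_group G d p\<^esub>"
    using \<open>x \<in> carrier (lp_group G d p)\<close> lp_inv_closed lp_component group_factor
    by (intro bexI[of _ "\<lambda>n. inv\<^bsub>G n\<^esub> x n"]) (auto intro!: ext group.l_inv)
qed (simp_all add: lp_mult_closed lp_one_closed)

lemma lp_group_inv:
  assumes "x \<in> lp" shows "inv\<^bsub>lp_group G d p\<^esub> x = (\<lambda>n. inv\<^bsub>G n\<^esub> x n)"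
  using assms lp_inv_closed[OF assms] lp_component[OF assms] group_factor
  by (intro group.inv_equality[OF group_lp_group]) (auto intro!: ext group.l_inv)

lemma left_invariant_lp_group: "left_invariant (lp_group G d p) (lp_dist d p)"
  using left_inv lp_component unfolding left_invariant_def lp_dist_def by simp

lemma lp_continuous_map_componentwise:
  assumes cont: "\<And>n. continuous_map (factor_topology n) (factor_topology n) (f n)"
    and closed: "\<And>x. x \<in> lp \<Longrightarrow> (\<lambda>n. f n (x n)) \<in> lp"
    and dominated: "\<And>a. a \<in> lp \<Longrightarrow> \<exists>t. (\<forall>n. 0 \<le> t n) \<and> summable (\<lambda>n. t n powr p) \<and>
      (\<forall>x\<in>lp. \<forall>n. d n (f n (a n)) (f n (x n)) \<le> t n + d n (a n) (x n))"
  shows "continuous_map lp_topology lp_topology (\<lambda>x n. f n (x n))"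
  unfolding Metric_space.metric_continuous_map[OF Metric_space_lp Metric_space_lp] lp_dist_eq_lp_norm
proof (intro conjI ballI allI impI)
  show "(\<lambda>x n. f n (x n)) ` lp \<subseteq> lp" using closed by blast
next
  fix a :: "nat \<Rightarrow> 'a" and \<epsilon> :: real assume "a \<in> lp" and "0 < \<epsilon>"
  obtain t where "\<forall>n. 0 \<le> t n" "summable (\<lambda>n. t n powr p)"
    and t: "\<forall>x\<in>lp. \<forall>n. d n (f n (a n)) (f n (x n)) \<le> t n + d n (a n) (x n)"
    using dominated[OF \<open>a \<in> lp\<close>] by blast
  have "\<exists>\<delta>>0. \<forall>x\<in>lp. d n (a n) (x n) < \<delta> \<longrightarrow> d n (f n (a n)) (f n (x n)) < \<eta>" if "0 < \<eta>" for n \<eta>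
  proof -
    obtain \<delta> where "0 < \<delta>"
      and \<delta>: "\<forall>z. z \<in> carrier (G n) \<and> d n (a n) z < \<delta> \<longrightarrow> d n (f n (a n)) (f n z) < \<eta>"
      using cont[of n, unfolded Metric_space.metric_continuous_map[OF metric metric]]
        lp_component[OF \<open>a \<in> lp\<close>, of n] \<open>0 < \<eta>\<close> by meson
    then show ?thesis using lp_component by auto
  qed
  then have "\<exists>\<delta>>0. \<forall>x\<in>lp. lp_norm p (\<lambda>n. d n (a n) (x n)) < \<delta> \<longrightarrow>
               lp_norm p (\<lambda>n. d n (f n (a n)) (f n (x n))) < \<epsilon>"
    using \<open>\<forall>n. 0 \<le> t n\<close> t summable_lp_dist[OF \<open>a \<in> lp\<close>]
    by (intro lp_norm_small_if_dominated[OF p _ \<open>summable (\<lambda>n. t n powr p)\<close> \<open>0 < \<epsilon>\<close>]) simp_all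
  then show "\<exists>\<delta>>0. \<forall>x. x \<in> lp \<and> lp_norm p (\<lambda>n. d n (a n) (x n)) < \<delta> \<longrightarrow>
               lp_norm p (\<lambda>n. d n (f n (a n)) (f n (x n))) < \<epsilon>"
    by blast
qed

lemma lp_continuous_map_mult_right:
  assumes "y \<in> lp"
  shows "continuous_map lp_topology lp_topology (\<lambda>x n. x n \<otimes>\<^bsub>G n\<^esub> y n)"
proof (rule lp_continuous_map_componentwise[where f = "\<lambda>n z. z \<otimes>\<^bsub>G n\<^esub> y n"])
  show "continuous_map (factor_topology n) (factor_topology n) (\<lambda>z. z \<otimes>\<^bsub>G n\<^esub> y n)" for n
    by (rule topological_group_continuous_map_mult_right[OF topgrp lp_component[OF assms]])
  show "(\<lambda>n. x n \<otimes>\<^bsub>G n\<^esub> y n) \<in> lp" if "x \<in> lp" for x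
    by (rule lp_mult_closed[OF that assms])
  show "\<exists>t. (\<forall>n. 0 \<le> t n) \<and> summable (\<lambda>n. t n powr p) \<and>
          (\<forall>x\<in>lp. \<forall>n. d n (a n \<otimes>\<^bsub>G n\<^esub> y n) (x n \<otimes>\<^bsub>G n\<^esub> y n) \<le> t n + d n (a n) (x n))"
    if "a \<in> lp" for a
    using summable_double_dist_one[OF assms] \<open>a \<in> lp\<close> assms
      left_invariant_dist_mult_right_le[OF group_factor metric left_inv lp_component lp_component lp_component]
    by (intro exI[of _ "\<lambda>n. 2 * d n (y n) \<one>\<^bsub>G n\<^esub>"]) auto
qed

lemma lp_continuous_map_inv: "continuous_map lp_topology lp_topology (\<lambda>x n. inv\<^bsub>G n\<^esub> x n)"
proof (rule lp_continuous_map_componentwise[where f = "\<lambda>n z. inv\<^bsub>G n\<^esub> z"])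
  show "continuous_map (factor_topology n) (factor_topology n) (\<lambda>z. inv\<^bsub>G n\<^esub> z)" for n
    using topgrp unfolding topological_group_def by blast
  show "(\<lambda>n. inv\<^bsub>G n\<^esub> x n) \<in> lp" if "x \<in> lp" for x
    by (rule lp_inv_closed[OF that])
  show "\<exists>t. (\<forall>n. 0 \<le> t n) \<and> summable (\<lambda>n. t n powr p) \<and>
          (\<forall>x\<in>lp. \<forall>n. d n (inv\<^bsub>G n\<^esub> a n) (inv\<^bsub>G n\<^esub> x n) \<le> t n + d n (a n) (x n))"
    if "a \<in> lp" for a
    using summable_double_dist_one[OF \<open>a \<in> lp\<close>] \<open>a \<in> lp\<close>
      left_invariant_dist_inv_le[OF group_factor metric left_inv lp_component lp_component]
    by (intro exI[of _ "\<lambda>n. 2 * d n (a n) \<one>\<^bsub>G n\<^esub>"]) auto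
qed

lemma topological_group_lp_group:
  "topological_group (lp_group G d p) (Metric_space.mtopology (carrier (lp_group G d p)) (lp_dist d p))"
proof (rule topological_group_of_left_invariant_metric)
  have "continuous_map lp_topology lp_topology (\<lambda>x. inv\<^bsub>lp_group G d p\<^esub> x)"
    by (rule continuous_map_eq[OF lp_continuous_map_inv])
      (simp add: Metric_space.topspace_mtopology[OF Metric_space_lp] lp_group_inv)
  then show "continuous_map (Metric_space.mtopology (carrier (lp_group G d p)) (lp_dist d p))
      (Metric_space.mtopology (carrier (lp_group G d p)) (lp_dist d p)) (\<lambda>x. inv\<^bsub>lp_group G d p\<^esub> x)"
    by simp
qed (simp_all add: group_lp_group Metric_space_lp left_invariant_lp_group lp_continuous_map_mult_right)

end

theorem mainTheorem16:
  fixes G :: "nat \<Rightarrow> ('a, 'b) monoid_scheme"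
    and d :: "nat \<Rightarrow> 'a \<Rightarrow> 'a \<Rightarrow> real"
    and p :: real
  assumes metric: "\<And>n. Metric_space (carrier (G n)) (d n)"
    and left_inv: "\<And>n. left_invariant (G n) (d n)"
    and topgrp: "\<And>n. topological_group (G n) (Metric_space.mtopology (carrier (G n)) (d n))"
    and p: "1 \<le> p"
  shows "Metric_space (carrier (lp_group G d p)) (lp_dist d p) \<and>
         topological_group (lp_group G d p)
           (Metric_space.mtopology (carrier (lp_group G d p)) (lp_dist d p))"
proof -
  interpret lp_product G d p by (rule lp_product.intro[OF metric left_inv topgrp p])
  show ?thesis using Metric_space_lp topological_group_lp_group by simp
qed

end
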